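(* Let $X$ be a real Banach space, let $K\subseteq X$ be closed and nonempty, let $x\in X\setminus K$, and let $\overline{x}\in K$ be a nearest point to $x$ in $K$ (i.e. $\|x-\overline{x}\|=d_K(x)$). If the norm of $X$ is Gateaux differentiable at $x-\overline{x}$ and $d_{K}^{-}(x;x-\overline{x})=d_{K}(x)$, then $d_{K}$ is Gateaux differentiable at $x$.
   Context: For a nonempty subset $K$ of a real Banach space $(X,\|\cdot\|)$, $d_{K}(x)=\inf\{\|x-v\|: v\in K\}$. For $x,y\in X$, $d_{K}^{-}(x;y)=\liminf_{t\to 0^{+}}\frac{d_{K}(x+ty)-d_{K}(x)}{t}$. A function $f:X\to\mathbb{R}$ is Gateaux differentiable at $x$ if there is $A\in X^{*}$ with $A(y)=\lim_{t\to 0}\frac{f(x+ty)-f(x)}{t}$ for all $y\in X$; the norm is Gateaux differentiable at a nonzero $u$ if $v\mapsto\|v\|$ is Gateaux differentiable at $u$. *)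

theory Defs
  imports "HOL-Analysis.Analysis"
begin

definition distfun :: "'a::real_normed_vector set \<Rightarrow> 'a \<Rightarrow> real" where
  "distfun K x = infdist x K"

definition lower_dini :: "('a::real_normed_vector \<Rightarrow> real) \<Rightarrow> 'a \<Rightarrow> 'a \<Rightarrow> ereal" where
  "lower_dini f x y = Liminf (at_right (0::real)) (\<lambda>t. ereal ((f (x + t *\<^sub>R y) - f x) / t))"

definition gateaux_differentiable :: "('a::real_normed_vector \<Rightarrow> real) \<Rightarrow> 'a \<Rightarrow> bool" where
  "gateaux_differentiable f x \<longleftrightarrow>
     (\<exists>A. bounded_linear A \<and>
        (\<forall>y. ((\<lambda>t. (f (x + t *\<^sub>R y) - f x) / t) \<longlongrightarrow> A y) (at (0::real))))"

end

theory Submission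
  imports Defs
begin

text \<open>Write \<open>u = x - xbar\<close>. Since \<open>xbar \<in> K\<close>, \<open>d\<^sub>K(x + t y) \<le> \<parallel>u + t y\<parallel>\<close> with equality at
  \<open>t = 0\<close>, so the right difference quotients of \<open>d\<^sub>K\<close> are bounded above by those of the norm at
  \<open>u\<close>. For the matching lower bound, compare \<open>x + t y\<close> with the point \<open>x + (t/s) u\<close> on the ray
  through \<open>u\<close>: the Dini hypothesis says \<open>d\<^sub>K\<close> grows with slope at least \<open>\<parallel>u\<parallel>\<close> along that ray,
  and the Lipschitz property of \<open>d\<^sub>K\<close> turns this into a lower bound by the norm quotient at \<open>u\<close>
  in direction \<open>-y\<close> and step \<open>s\<close>. Letting \<open>t \<rightarrow> 0\<^sup>+\<close> and then \<open>s \<rightarrow> 0\<^sup>+\<close> squeezes the right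
  quotients of \<open>d\<^sub>K\<close> to the Gateaux derivative of the norm; left quotients follow by \<open>y \<mapsto> -y\<close>.\<close>

definition diff_quot :: "('a::real_normed_vector \<Rightarrow> real) \<Rightarrow> 'a \<Rightarrow> 'a \<Rightarrow> real \<Rightarrow> real" where
  "diff_quot f x y t = (f (x + t *\<^sub>R y) - f x) / t"

lemma diff_quot_uminus: "diff_quot f x y (- t) = - diff_quot f x (- y) t"
  by (simp add: diff_quot_def)

lemma lower_dini_diff_quot: "lower_dini f x y = Liminf (at_right 0) (\<lambda>t. ereal (diff_quot f x y t))"
  by (simp add: lower_dini_def diff_quot_def)

lemma gateaux_differentiable_diff_quot:
  "gateaux_differentiable f x \<longleftrightarrow>
     (\<exists>A. bounded_linear A \<and> (\<forall>y. (diff_quot f x y \<longlongrightarrow> A y) (at 0)))"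
  by (simp add: gateaux_differentiable_def diff_quot_def[abs_def])

lemma lower_dini_geD:
  assumes "ereal c \<le> lower_dini f x y" and "c' < c"
  shows "\<forall>\<^sub>F t in at_right 0. c' < diff_quot f x y t"
proof -
  have "ereal c' < ereal c" using assms(2) by simp
  with assms(1) have "\<forall>\<^sub>F t in at_right 0. ereal c' < ereal (diff_quot f x y t)"
    unfolding lower_dini_diff_quot le_Liminf_iff by blast
  then show ?thesis by simp
qed

lemma diff_quot_tendsto_at_from_at_right:
  assumes "linear A" and right: "\<And>y. (diff_quot f x y \<longlongrightarrow> A y) (at_right 0)"
  shows "(diff_quot f x y \<longlongrightarrow> A y) (at 0)"
proof (rule filterlim_split_at)
  have "((\<lambda>t. - diff_quot f x (- y) t) \<longlongrightarrow> - A (- y)) (at_right 0)"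
    using right by (rule tendsto_minus)
  then have "((\<lambda>t. diff_quot f x y (- t)) \<longlongrightarrow> A y) (at_right 0)"
    using linear_neg[OF assms(1)] by (simp add: diff_quot_uminus)
  then show "(diff_quot f x y \<longlongrightarrow> A y) (at_left 0)"
    by (simp add: at_left_minus filterlim_filtermap)
qed (rule right)

lemma filterlim_divide_const_at_right_0:
  fixes s :: real
  assumes "s > 0"
  shows "filterlim (\<lambda>t. t / s) (at_right 0) (at_right 0)"
proof -
  have "((\<lambda>t. t / s) \<longlongrightarrow> 0 / s) (at_right 0)"
    using assms by (intro tendsto_intros) simp
  moreover have "\<forall>\<^sub>F t in at_right 0. t / s \<in> {0<..} \<and> t / s \<noteq> 0"
    using eventually_at_right_less[of "0::real"] by eventually_elim (use assms in auto)
  ultimately show ?thesis by (simp add: filterlim_at)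
qed

lemma distfun_le_norm: "v \<in> K \<Longrightarrow> distfun K z \<le> norm (z - v)"
  using infdist_le[of v K z] by (simp add: distfun_def dist_norm)

lemma distfun_ge_sub_norm: "distfun K w - norm (w - z) \<le> distfun K z"
  using infdist_triangle[of w K z] by (simp add: distfun_def dist_norm)

lemma diff_quot_distfun_le_norm:
  assumes "xbar \<in> K" and "norm (x - xbar) = distfun K x" and "t > 0"
  shows "diff_quot (distfun K) x y t \<le> diff_quot norm (x - xbar) y t"
proof -
  have "distfun K (x + t *\<^sub>R y) \<le> norm (x - xbar + t *\<^sub>R y)"
    using distfun_le_norm[OF assms(1), of "x + t *\<^sub>R y"] by (simp add: algebra_simps)
  then show ?thesis
    using assms(2,3) by (simp add: diff_quot_def divide_right_mono)
qed

lemma diff_quot_distfun_ge_rescaled: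
  assumes "s > 0" and "t > 0"
  shows "(diff_quot (distfun K) x u (t / s) - norm (u - s *\<^sub>R y)) / s
           \<le> diff_quot (distfun K) x y t"
proof -
  define r where "r = t / s"
  have t: "t = r * s" and r: "r > 0" using assms by (simp_all add: r_def)
  have "r *\<^sub>R u - t *\<^sub>R y = r *\<^sub>R (u - s *\<^sub>R y)" by (simp add: t algebra_simps)
  then have "distfun K (x + r *\<^sub>R u) - r * norm (u - s *\<^sub>R y) \<le> distfun K (x + t *\<^sub>R y)"
    using distfun_ge_sub_norm[of K "x + r *\<^sub>R u" "x + t *\<^sub>R y"] r by simp
  then have "r * diff_quot (distfun K) x u r - r * norm (u - s *\<^sub>R y)
      \<le> r * s * diff_quot (distfun K) x y t"
    using r assms by (simp add: diff_quot_def t)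
  then show ?thesis
    using r assms by (simp add: r_def[symmetric] pos_divide_le_eq right_diff_distrib[symmetric]
        mult_le_cancel_left_pos mult.commute)
qed

lemma diff_quot_distfun_tendsto_at_right:
  assumes xbar: "xbar \<in> K" and nearest: "norm (x - xbar) = distfun K x"
    and dini: "ereal (distfun K x) \<le> lower_dini (distfun K) x (x - xbar)"
    and norm_pos: "(diff_quot norm (x - xbar) y \<longlongrightarrow> L) (at_right 0)"
    and norm_neg: "(diff_quot norm (x - xbar) (- y) \<longlongrightarrow> - L) (at_right 0)"
  shows "(diff_quot (distfun K) x y \<longlongrightarrow> L) (at_right 0)"
proof (rule order_tendstoI)
  fix a assume "a > L"
  with norm_pos have "\<forall>\<^sub>F t in at_right 0. diff_quot norm (x - xbar) y t < a"
    by (rule order_tendstoD)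
  with eventually_at_right_less[of "0::real"]
  show "\<forall>\<^sub>F t in at_right 0. diff_quot (distfun K) x y t < a"
    by eventually_elim (use diff_quot_distfun_le_norm[OF xbar nearest] in \<open>blast intro: order_le_less_trans\<close>)
next
  fix a assume "a < L"
  define \<epsilon> where "\<epsilon> = L - a"
  define u where "u = x - xbar"
  have "\<epsilon> > 0" using \<open>a < L\<close> by (simp add: \<epsilon>_def)
  have "\<forall>\<^sub>F s in at_right 0. diff_quot norm u (- y) s < - L + \<epsilon> / 2 \<and> 0 < s"
    using order_tendstoD(2)[OF norm_neg, of "- L + \<epsilon> / 2"] \<open>\<epsilon> > 0\<close>
      eventually_at_right_less[of "0::real"] by (simp add: u_def eventually_conj)
  then obtain s where s: "s > 0" and step: "diff_quot norm u (- y) s < - L + \<epsilon> / 2"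
    using eventually_happens'[OF trivial_limit_at_right_real] by blast
  have "\<forall>\<^sub>F r in at_right 0. distfun K x - s * \<epsilon> / 2 < diff_quot (distfun K) x u r"
    using lower_dini_geD[OF dini, of "distfun K x - s * \<epsilon> / 2"] s \<open>\<epsilon> > 0\<close>
    by (simp add: u_def)
  then have "\<forall>\<^sub>F t in at_right 0. distfun K x - s * \<epsilon> / 2 < diff_quot (distfun K) x u (t / s)"
    using filterlim_divide_const_at_right_0[OF s] by (rule eventually_compose_filterlim)
  with eventually_at_right_less[of "0::real"]
  show "\<forall>\<^sub>F t in at_right 0. a < diff_quot (distfun K) x y t"
  proof eventually_elim
    case (elim t)
    have "norm (u - s *\<^sub>R y) = distfun K x + s * diff_quot norm u (- y) s"
      using s by (simp add: diff_quot_def u_def nearest)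
    moreover have "s * diff_quot norm u (- y) s < s * (- L + \<epsilon> / 2)"
      using step s by (rule mult_strict_left_mono)
    ultimately have "a < (distfun K x - s * \<epsilon> / 2 - norm (u - s *\<^sub>R y)) / s"
      using s by (simp add: \<epsilon>_def field_simps)
    also have "\<dots> < (diff_quot (distfun K) x u (t / s) - norm (u - s *\<^sub>R y)) / s"
      using elim(2) s by (simp add: divide_strict_right_mono)
    also have "\<dots> \<le> diff_quot (distfun K) x y t"
      using diff_quot_distfun_ge_rescaled[OF s elim(1)] .
    finally show ?case .
  qed
qed

theorem corollary2:
  fixes K :: "'a::banach set" and x xbar :: 'a
  assumes "closed K" and "K \<noteq> {}"
    and "x \<notin> K"
    and "xbar \<in> K" and "norm (x - xbar) = distfun K x"
    and "gateaux_differentiable norm (x - xbar)"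
    and "lower_dini (distfun K) x (x - xbar) = ereal (distfun K x)"
  shows "gateaux_differentiable (distfun K) x"
proof -
  obtain A where A: "bounded_linear A"
    and norm_quot: "\<And>y. (diff_quot norm (x - xbar) y \<longlongrightarrow> A y) (at 0)"
    using assms(6) unfolding gateaux_differentiable_diff_quot by blast
  have "(diff_quot (distfun K) x y \<longlongrightarrow> A y) (at_right 0)" for y
  proof (rule diff_quot_distfun_tendsto_at_right[OF assms(4,5)])
    show "ereal (distfun K x) \<le> lower_dini (distfun K) x (x - xbar)"
      using assms(7) by simp
    show "(diff_quot norm (x - xbar) y \<longlongrightarrow> A y) (at_right 0)"
      using norm_quot by (rule filterlim_mono) (simp_all add: at_le)
    show "(diff_quot norm (x - xbar) (- y) \<longlongrightarrow> - A y) (at_right 0)"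
      using norm_quot[of "- y"] A by (simp add: linear_simps filterlim_mono at_le)
  qed
  then have "(diff_quot (distfun K) x y \<longlongrightarrow> A y) (at 0)" for y
    using A by (intro diff_quot_tendsto_at_from_at_right) (auto dest: bounded_linear.linear)
  with A show ?thesis
    unfolding gateaux_differentiable_diff_quot by blast
qed

end
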